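(* Let $L$ be a finite geometric lattice, fix a total order on its set of atoms $A(L)$, and let $\lambda$ be the minimum labeling: for a cover $x\lessdot y$, $\lambda(x\lessdot y)$ is the smallest atom $a$ (in the fixed order) with $x\vee a=y$. Then $\lambda$ is an EW-labeling of $L$.
   Context: An E-labeling is a map $\lambda$ from the cover relations of $L$ to a poset $\Lambda$ (here the totally ordered set $A(L)$). Words of labels of saturated chains are read bottom to top; a chain is increasing if its word is strictly increasing and ascent-free if no two consecutive labels $a,b$ satisfy $a<b$. An ER-labeling is an E-labeling such that every closed interval has exactly one increasing maximal chain. Rank two switching property: for every saturated chain $\hat0=x_0\lessdot\cdots\lessdot x_k$ and every $i$ with $\lambda(x_{i-1}\lessdot x_i)<\lambda(x_i\lessdot x_{i+1})$ there is a unique $x_i'$ with $x_{i-1}\lessdot x_i'\lessdot x_{i+1}$, $\lambda(x_{i-1}\lessdot x_i')=\lambda(x_i\lessdot x_{i+1})$ and $\lambda(x_i'\lessdot x_{i+1})=\lambda(x_{i-1}\lessdot x_i)$. An EW-labeling is an ER-labeling with the rank two switching property such that in each interval distinct maximal chains have distinct words of labels. *)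

theory Defs
  imports Main
begin

definition cover :: "'a::order \<Rightarrow> 'a \<Rightarrow> bool" where
  "cover x y \<longleftrightarrow> x < y \<and> \<not> (\<exists>z. x < z \<and> z < y)"

definition atom :: "'a::bounded_lattice \<Rightarrow> bool" where
  "atom a \<longleftrightarrow> cover bot a"

text \<open>A finite geometric lattice: a finite lattice (hence bounded) which is
  (written with cover/atom unfolded, since class axioms cannot use them)
  atomistic (every non-bottom element is the join of the atoms below it) and
  (upper) semimodular.\<close>
class geometric_lattice = finite + bounded_lattice +
  assumes atomistic:
    "x \<noteq> bot \<Longrightarrow> x = Sup_fin {a. (bot < a \<and> \<not> (\<exists>z. bot < z \<and> z < a)) \<and> a \<le> x}"
  assumes semimodular:
    "inf x y < x \<and> \<not> (\<exists>z. inf x y < z \<and> z < x) \<Longrightarrow>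
     y < sup x y \<and> \<not> (\<exists>z. y < z \<and> z < sup x y)"

text \<open>R is the (reflexive) total order on the atoms; the label of a cover x \<lessdot> y is
  the R-smallest atom a with x \<squnion> a = y.\<close>
definition min_label :: "('a::bounded_lattice \<times> 'a) set \<Rightarrow> 'a \<Rightarrow> 'a \<Rightarrow> 'a" where
  "min_label R x y = (THE a. atom a \<and> sup x a = y \<and>
      (\<forall>b. atom b \<and> sup x b = y \<longrightarrow> (a, b) \<in> R))"

definition sat_chain :: "'a::order \<Rightarrow> 'a \<Rightarrow> 'a list \<Rightarrow> bool" where
  "sat_chain x y c \<longleftrightarrow> c \<noteq> [] \<and> hd c = x \<and> last c = y \<and>
     (\<forall>i. i + 1 < length c \<longrightarrow> cover (c ! i) (c ! (i + 1)))"

definition label_word :: "('a \<Rightarrow> 'a \<Rightarrow> 'l) \<Rightarrow> 'a list \<Rightarrow> 'l list" where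
  "label_word lam c = map (\<lambda>i. lam (c ! i) (c ! (i + 1))) [0..<length c - 1]"

text \<open>lt is the strict order on the label poset.\<close>
definition increasing :: "('l \<Rightarrow> 'l \<Rightarrow> bool) \<Rightarrow> 'l list \<Rightarrow> bool" where
  "increasing lt w \<longleftrightarrow> (\<forall>i. i + 1 < length w \<longrightarrow> lt (w ! i) (w ! (i + 1)))"

definition ER_labeling :: "('l \<Rightarrow> 'l \<Rightarrow> bool) \<Rightarrow> ('a::order \<Rightarrow> 'a \<Rightarrow> 'l) \<Rightarrow> bool" where
  "ER_labeling lt lam \<longleftrightarrow>
     (\<forall>x y. x \<le> y \<longrightarrow> (\<exists>!c. sat_chain x y c \<and> increasing lt (label_word lam c)))"

definition rank_two_switching ::
  "('l \<Rightarrow> 'l \<Rightarrow> bool) \<Rightarrow> ('a::bounded_lattice \<Rightarrow> 'a \<Rightarrow> 'l) \<Rightarrow> bool" where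
  "rank_two_switching lt lam \<longleftrightarrow>
     (\<forall>c y i. sat_chain bot y c \<longrightarrow> 0 < i \<longrightarrow> i + 1 < length c \<longrightarrow>
        lt (lam (c ! (i - 1)) (c ! i)) (lam (c ! i) (c ! (i + 1))) \<longrightarrow>
        (\<exists>!x'. cover (c ! (i - 1)) x' \<and> cover x' (c ! (i + 1)) \<and>
               lam (c ! (i - 1)) x' = lam (c ! i) (c ! (i + 1)) \<and>
               lam x' (c ! (i + 1)) = lam (c ! (i - 1)) (c ! i)))"

definition distinct_words :: "('a::order \<Rightarrow> 'a \<Rightarrow> 'l) \<Rightarrow> bool" where
  "distinct_words lam \<longleftrightarrow>
     (\<forall>x y c1 c2. sat_chain x y c1 \<longrightarrow> sat_chain x y c2 \<longrightarrow>
        label_word lam c1 = label_word lam c2 \<longrightarrow> c1 = c2)"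

definition EW_labeling ::
  "('l \<Rightarrow> 'l \<Rightarrow> bool) \<Rightarrow> ('a::bounded_lattice \<Rightarrow> 'a \<Rightarrow> 'l) \<Rightarrow> bool" where
  "EW_labeling lt lam \<longleftrightarrow> ER_labeling lt lam \<and> rank_two_switching lt lam \<and> distinct_words lam"

end

(* By atomisticity every cover x \<lessdot> y is x \<squnion> a for some atom a, so the minimum
   label exists and y = x \<squnion> \<lambda>(x \<lessdot> y); hence a chain is determined by its bottom and
   its word. If \<lambda>(x \<lessdot> y) = a \<le> b = \<lambda>(y \<lessdot> z), semimodularity makes x \<squnion> b a cover
   of x below z, and the chain x \<lessdot> x \<squnion> b \<lessdot> z carries the labels b, a.
   The first label of an increasing chain from x to y is the least atom below y
   but not below x: such an atom is either joined in at the first step or lies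
   beyond it, where it bounds the (increasing) later labels from above. This
   gives uniqueness of increasing chains, and choosing these least atoms greedily
   gives existence. *)

theory Submission
  imports Defs
begin

lemma atom_iff: "atom a \<longleftrightarrow> bot < a \<and> \<not> (\<exists>z. bot < z \<and> z < a)"
  by (simp add: atom_def cover_def)

lemma exists_atom_below:
  fixes y :: "'a::{finite, bounded_lattice}"
  assumes "y \<noteq> bot"
  obtains a where "atom a" "a \<le> y"
proof -
  let ?S = "{z. bot < z \<and> z \<le> y}"
  have "?S \<noteq> {}" using assms bot.not_eq_extremum by blast
  then obtain m where m: "bot < m" "m \<le> y" and min: "\<forall>z\<in>?S. z \<le> m \<longrightarrow> m = z"
    using finite_has_minimal[of ?S] by auto
  have "atom m"
    unfolding atom_iff
  proof (intro conjI notI)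
    show "bot < m" by (fact m(1))
    assume "\<exists>z. bot < z \<and> z < m"
    then obtain z where z: "bot < z" "z < m" by blast
    moreover have "z \<le> y" using less_le_trans[OF z(2) m(2)] by simp
    ultimately show False using min by auto
  qed
  with m show thesis by (intro that)
qed

lemma atoms_le_imp_le:
  fixes x y :: "'a::geometric_lattice"
  assumes "\<And>a. atom a \<Longrightarrow> a \<le> y \<Longrightarrow> a \<le> x"
  shows "y \<le> x"
proof (cases "y = bot")
  case False
  let ?A = "{a. (bot < a \<and> \<not> (\<exists>z. bot < z \<and> z < a)) \<and> a \<le> y}"
  obtain a where "atom a" "a \<le> y" using exists_atom_below[OF False] .
  then have "?A \<noteq> {}" unfolding atom_iff by blast
  moreover have "a \<le> x" if "a \<in> ?A" for a using that assms unfolding atom_iff by simp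
  ultimately have "Sup_fin ?A \<le> x" by (intro Sup_fin.boundedI) simp_all
  then show ?thesis by (subst atomistic[OF False])
qed simp

lemma cover_sup_atom:
  fixes x a :: "'a::geometric_lattice"
  assumes "atom a" "\<not> a \<le> x"
  shows "cover x (sup x a)"
proof -
  have "inf a x = bot"
    using assms by (metis atom_iff bot.not_eq_extremum inf.absorb_iff1 inf.cobounded1 order_less_le)
  then show ?thesis
    using semimodular[of a x] assms(1) unfolding atom_iff cover_def by (simp add: sup_commute)
qed

lemma cover_sup_eq:
  fixes x y a :: "'a::lattice"
  assumes "cover x y" "a \<le> y" "\<not> a \<le> x"
  shows "sup x a = y"
  using assms unfolding cover_def by (metis le_sup_iff order_le_less sup.cobounded1 sup.orderI)

lemma cover_sup_imp_not_le:
  fixes x a :: "'a::lattice"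
  shows "cover x (sup x a) \<Longrightarrow> \<not> a \<le> x"
  by (auto simp: cover_def sup.absorb1)

lemma cover_imp_ex_atom_sup:
  fixes x y :: "'a::geometric_lattice"
  assumes "cover x y"
  obtains a where "atom a" "sup x a = y"
proof -
  have "\<not> y \<le> x" using assms unfolding cover_def by auto
  then obtain a where "atom a" "a \<le> y" "\<not> a \<le> x" using atoms_le_imp_le by metis
  with assms show thesis by (intro that) (auto intro: cover_sup_eq)
qed

lemma all_nth_Suc_iff_successively:
  "(\<forall>i. i + 1 < length xs \<longrightarrow> P (xs ! i) (xs ! (i + 1))) \<longleftrightarrow> successively P xs"
  by (induction P xs rule: successively.induct) (simp_all add: All_less_Suc2)

lemma sat_chain_iff_successively:
  "sat_chain x y c \<longleftrightarrow> c \<noteq> [] \<and> hd c = x \<and> last c = y \<and> successively cover c"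
  by (simp only: sat_chain_def all_nth_Suc_iff_successively)

lemma sat_chain_Nil [simp]: "\<not> sat_chain x y []"
  by (simp add: sat_chain_def)

lemma sat_chain_singleton [simp]: "sat_chain x y [u] \<longleftrightarrow> u = x \<and> x = y"
  by (auto simp: sat_chain_iff_successively)

lemma sat_chain_Cons_Cons [simp]:
  "sat_chain x y (u # v # r) \<longleftrightarrow> u = x \<and> cover x v \<and> sat_chain v y (v # r)"
  by (auto simp: sat_chain_iff_successively)

lemma sat_chain_cases:
  assumes "sat_chain x y c"
  obtains "c = [x]" "x = y"
    | v r where "c = x # v # r" "cover x v" "sat_chain v y (v # r)"
  using assms by (cases c rule: remdups_adj.cases) auto

lemma sat_chain_induct [consumes 1, case_names singleton step]:
  assumes "sat_chain x y c"
    and "P y [y]"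
    and "\<And>x v r. cover x v \<Longrightarrow> sat_chain v y (v # r) \<Longrightarrow> P v (v # r) \<Longrightarrow> P x (x # v # r)"
  shows "P x c"
  using assms(1)
proof (induction c arbitrary: x)
  case (Cons u c)
  from Cons.prems show ?case
  proof (cases rule: sat_chain_cases)
    case (2 v r)
    with Cons.IH[of v] show ?thesis using assms(3)[of x v r] by simp
  qed (simp add: assms(2))
qed simp

lemma sat_chain_le: "sat_chain x y c \<Longrightarrow> x \<le> y"
  by (induction rule: sat_chain_induct) (auto simp: cover_def)

lemma sat_chain_Cons_Cons_less: "sat_chain x y (x # v # r) \<Longrightarrow> x < y"
  using sat_chain_le[of v y "v # r"] by (auto simp: cover_def)

lemma label_word_singleton [simp]: "label_word lam [u] = []"
  by (simp add: label_word_def)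

lemma label_word_Cons_Cons [simp]:
  "label_word lam (u # v # r) = lam u v # label_word lam (v # r)"
  by (simp add: label_word_def upt_conv_Cons map_Suc_upt[symmetric] del: upt_Suc)

lemma increasing_iff_successively: "increasing lt w \<longleftrightarrow> successively lt w"
  by (simp only: increasing_def all_nth_Suc_iff_successively)

lemma sat_chains_eq_if_label_words_eq:
  fixes lam :: "'a::lattice \<Rightarrow> 'a \<Rightarrow> 'a"
  assumes recover: "\<And>u v. cover u v \<Longrightarrow> sup u (lam u v) = v"
    and "sat_chain x y c1" "sat_chain x y c2" "label_word lam c1 = label_word lam c2"
  shows "c1 = c2"
  using assms(2-)
proof (induction arbitrary: c2 rule: sat_chain_induct)
  case singleton
  then show ?case by (cases rule: sat_chain_cases) auto
next
  case (step x v r)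
  from \<open>sat_chain x y c2\<close> show ?case
  proof (cases rule: sat_chain_cases)
    case (2 v' r')
    with step.prems have "lam x v = lam x v'" "label_word lam (v # r) = label_word lam (v' # r')"
      by simp_all
    moreover have "v = v'" using recover \<open>cover x v\<close> \<open>cover x v'\<close> \<open>lam x v = lam x v'\<close> by metis
    ultimately show ?thesis using step.IH[of "v' # r'"] 2 by simp
  qed (use step.prems in simp)
qed

context
  fixes R :: "('a::geometric_lattice \<times> 'a) set"
  assumes linear: "linear_order_on {a. atom a} R"
begin

abbreviation R_less :: "'a \<Rightarrow> 'a \<Rightarrow> bool" where
  "R_less a b \<equiv> (a, b) \<in> R \<and> a \<noteq> b"

lemma R_trans: "(a, b) \<in> R \<Longrightarrow> (b, c) \<in> R \<Longrightarrow> (a, c) \<in> R"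
  using linear unfolding linear_order_on_def partial_order_on_def preorder_on_def trans_def by blast

lemma R_antisym: "(a, b) \<in> R \<Longrightarrow> (b, a) \<in> R \<Longrightarrow> a = b"
  using linear unfolding linear_order_on_def partial_order_on_def antisym_def by blast

lemma exists_R_least:
  assumes "S \<noteq> {}" "S \<subseteq> {a. atom a}"
  obtains m where "m \<in> S" "\<And>b. b \<in> S \<Longrightarrow> (m, b) \<in> R"
proof -
  have "wf (R - Id)"
    using finite_acyclic_wf[OF _ linear_order_on_acyclic[OF linear]] by simp
  then obtain m where m: "m \<in> S" and no_less: "\<And>b. (b, m) \<in> R - Id \<Longrightarrow> b \<notin> S"
    using assms(1) wfE_min by (metis ex_in_conv)
  have "(m, b) \<in> R" if "b \<in> S" for b
  proof (cases "b = m")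
    case True
    then show ?thesis
      using linear m assms(2) unfolding linear_order_on_def partial_order_on_def
        preorder_on_def refl_on_def by auto
  next
    case False
    then show ?thesis
      using linear m that no_less[of b] assms(2) unfolding linear_order_on_def total_on_def by blast
  qed
  with m show thesis by (rule that)
qed

lemma min_label_eqI:
  assumes "atom a" "sup x a = y" "\<And>b. atom b \<Longrightarrow> sup x b = y \<Longrightarrow> (a, b) \<in> R"
  shows "min_label R x y = a"
  unfolding min_label_def using assms R_antisym by (intro the_equality) blast+

lemma min_label_cover:
  assumes "cover x y"
  shows "atom (min_label R x y)" "sup x (min_label R x y) = y"
    and "\<And>b. atom b \<Longrightarrow> sup x b = y \<Longrightarrow> (min_label R x y, b) \<in> R"
proof -
  obtain a where "atom a" "sup x a = y" using cover_imp_ex_atom_sup[OF assms] .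
  then obtain m where m: "m \<in> {a. atom a \<and> sup x a = y}"
      and least: "\<And>b. b \<in> {a. atom a \<and> sup x a = y} \<Longrightarrow> (m, b) \<in> R"
    using exists_R_least[of "{a. atom a \<and> sup x a = y}"] by blast
  then have "min_label R x y = m" by (intro min_label_eqI) auto
  with m least show "atom (min_label R x y)" "sup x (min_label R x y) = y"
    and "\<And>b. atom b \<Longrightarrow> sup x b = y \<Longrightarrow> (min_label R x y, b) \<in> R" by auto
qed

lemma min_label_le: "cover x y \<Longrightarrow> min_label R x y \<le> y"
  by (metis min_label_cover(2) sup.cobounded2)

lemma min_label_not_le: "cover x y \<Longrightarrow> \<not> min_label R x y \<le> x"
  by (metis min_label_cover(2) cover_sup_imp_not_le)

lemma min_label_least_new_atom:
  assumes "cover x y" "atom b" "b \<le> y" "\<not> b \<le> x"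
  shows "(min_label R x y, b) \<in> R"
  using assms by (intro min_label_cover(3)) (auto intro: cover_sup_eq)

lemma min_label_switch:
  assumes xy: "cover x y" and yz: "cover y z"
    and ab: "(min_label R x y, min_label R y z) \<in> R"
  defines "x' \<equiv> sup x (min_label R y z)"
  shows "cover x x'" "cover x' z"
    and "min_label R x x' = min_label R y z" "min_label R x' z = min_label R x y"
proof -
  define a b where "a = min_label R x y" and "b = min_label R y z"
  have x': "x' = sup x b" unfolding x'_def b_def ..
  have "x < y" "y < z" using xy yz by (auto simp: cover_def)
  have "atom a" "sup x a = y" "atom b" "sup y b = z"
    using min_label_cover xy yz unfolding a_def b_def by blast+
  have "\<not> b \<le> x" using min_label_not_le[OF yz] \<open>x < y\<close> unfolding b_def by auto
  then show "cover x x'" unfolding x' by (rule cover_sup_atom[OF \<open>atom b\<close>])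
  have "sup x' a = sup (sup x a) b" unfolding x' by (simp add: ac_simps)
  then have x'a: "sup x' a = z" using \<open>sup x a = y\<close> \<open>sup y b = z\<close> by simp
  have "x' \<noteq> z" using \<open>cover x x'\<close> \<open>x < y\<close> \<open>y < z\<close> by (auto simp: cover_def)
  then have "\<not> a \<le> x'" using x'a by (auto simp: sup.absorb1)
  then show "cover x' z" using cover_sup_atom[OF \<open>atom a\<close>] x'a by metis
  have y_x: "sup y x = y" using \<open>x < y\<close> by (simp add: sup.absorb1)
  show "min_label R x x' = b"
  proof (rule min_label_eqI)
    fix c assume "atom c" "sup x c = x'"
    then have "sup y c = sup y x'" by (metis y_x sup.assoc)
    also have "\<dots> = z" unfolding x' using y_x \<open>sup y b = z\<close> by (metis sup.assoc)
    finally show "(b, c) \<in> R" using min_label_cover(3)[OF yz \<open>atom c\<close>] b_def by simp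
  qed (use \<open>atom b\<close> x' in simp_all)
  show "min_label R x' z = a"
  proof (rule min_label_eqI)
    fix c assume "atom c" "sup x' c = z"
    then have "c \<le> z" by (metis sup.cobounded2)
    have "\<not> c \<le> x'" using \<open>sup x' c = z\<close> \<open>x' \<noteq> z\<close> by (auto simp: sup.absorb1)
    then have "\<not> c \<le> x" unfolding x' by (metis le_supI1)
    show "(a, c) \<in> R"
    proof (cases "c \<le> y")
      case True
      then show ?thesis using min_label_least_new_atom[OF xy \<open>atom c\<close> _ \<open>\<not> c \<le> x\<close>] a_def by simp
    next
      case False
      then have "(b, c) \<in> R" using min_label_least_new_atom[OF yz \<open>atom c\<close> \<open>c \<le> z\<close>] b_def by simp
      then show ?thesis using ab R_trans unfolding a_def b_def by blast
    qed
  qed (use \<open>atom a\<close> x'a in simp_all)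
qed

lemma min_label_switch_unique:
  assumes "cover x y" "cover y z" "(min_label R x y, min_label R y z) \<in> R"
  shows "\<exists>!x'. cover x x' \<and> cover x' z \<and>
           min_label R x x' = min_label R y z \<and> min_label R x' z = min_label R x y"
proof
  show "cover x x'' \<and> cover x'' z \<and> min_label R x x'' = min_label R y z \<and>
      min_label R x'' z = min_label R x y \<Longrightarrow> x'' = sup x (min_label R y z)" for x''
    using min_label_cover(2)[of x x''] by metis
qed (use min_label_switch[OF assms] in blast)

lemma increasing_chain_first_label_least:
  assumes "sat_chain z y c" "cover x z"
    and "successively R_less (label_word (min_label R) (x # c))"
    and "atom b" "b \<le> y" "\<not> b \<le> x"
  shows "(min_label R x z, b) \<in> R"
  using assms
proof (induction arbitrary: x rule: sat_chain_induct)
  case singleton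
  then show ?case by (intro min_label_least_new_atom)
next
  case (step z v r)
  show ?case
  proof (cases "b \<le> z")
    case True
    then show ?thesis using min_label_least_new_atom step.prems by blast
  next
    case False
    with step have "(min_label R z v, b) \<in> R" by simp
    moreover have "(min_label R x z, min_label R z v) \<in> R" using step.prems(2) by simp
    ultimately show ?thesis by (rule R_trans[rotated])
  qed
qed

lemma min_label_sup_R_least:
  assumes "atom m" "\<not> m \<le> x"
    and "\<And>c. atom c \<Longrightarrow> c \<le> sup x m \<Longrightarrow> \<not> c \<le> x \<Longrightarrow> (m, c) \<in> R"
  shows "min_label R x (sup x m) = m"
proof (rule min_label_eqI)
  fix b assume "atom b" "sup x b = sup x m"
  moreover from this have "b \<le> sup x m" by (metis sup.cobounded2)
  moreover have "\<not> b \<le> x" using \<open>sup x b = sup x m\<close> assms(2) by (metis sup.absorb1 sup.cobounded2)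
  ultimately show "(m, b) \<in> R" using assms(3) by blast
qed (use assms in simp_all)

lemma exists_increasing_sat_chain:
  "x \<le> y \<Longrightarrow> \<exists>c. sat_chain x y c \<and> successively R_less (label_word (min_label R) c)"
proof (induction "card {a. atom a \<and> a \<le> y \<and> \<not> a \<le> x}" arbitrary: x rule: less_induct)
  case less
  let ?S = "\<lambda>x. {a. atom a \<and> a \<le> y \<and> \<not> a \<le> x}"
  show ?case
  proof (cases "?S x = {}")
    case True
    then have "x = y" using atoms_le_imp_le less.prems by (metis (mono_tags) empty_iff mem_Collect_eq order.antisym)
    then show ?thesis by (intro exI[of _ "[x]"]) simp
  next
    case False
    then obtain m where m: "m \<in> ?S x" and least: "\<And>b. b \<in> ?S x \<Longrightarrow> (m, b) \<in> R"
      using exists_R_least[of "?S x"] by blast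
    define z where "z = sup x m"
    have xz: "cover x z" unfolding z_def using m by (intro cover_sup_atom) auto
    have "z \<le> y" "x \<le> z" unfolding z_def using m less.prems by auto
    have label: "min_label R x z = m"
      using m \<open>z \<le> y\<close> unfolding z_def by (intro min_label_sup_R_least least) (auto intro: order_trans)
    have "?S z \<subseteq> ?S x" using \<open>x \<le> z\<close> by (auto intro: order_trans)
    moreover have "m \<notin> ?S z" by (simp add: z_def)
    ultimately have "?S z \<subset> ?S x" using m by blast
    then have "card (?S z) < card (?S x)" by (intro psubset_card_mono) simp_all
    then obtain c where c: "sat_chain z y c" "successively R_less (label_word (min_label R) c)"
      using less.hyps \<open>z \<le> y\<close> by blast
    from c(1) show ?thesis
    proof (cases rule: sat_chain_cases)
      case 1
      then show ?thesis using xz by (intro exI[of _ "[x, z]"]) simp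
    next
      case (2 w r)
      define l where "l = min_label R z w"
      have "atom l" "l \<le> w" "\<not> l \<le> z"
        using min_label_cover(1) min_label_le min_label_not_le \<open>cover z w\<close> unfolding l_def by blast+
      moreover have "w \<le> y" using sat_chain_le[OF \<open>sat_chain w y (w # r)\<close>] .
      ultimately have "l \<in> ?S x" "m \<noteq> l" using \<open>x \<le> z\<close> unfolding z_def by (auto intro: order_trans)
      then have "R_less (min_label R x z) (min_label R z w)" using least label l_def by simp
      with 2 c xz show ?thesis by (intro exI[of _ "x # c"]) simp
    qed
  qed
qed

lemma increasing_sat_chain_unique:
  assumes "sat_chain x y c1" "successively R_less (label_word (min_label R) c1)"
    and "sat_chain x y c2" "successively R_less (label_word (min_label R) c2)"
  shows "c1 = c2"
  using assms
proof (induction arbitrary: c2 rule: sat_chain_induct)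
  case singleton
  from singleton.prems(2) show ?case
    by (cases rule: sat_chain_cases) (use sat_chain_Cons_Cons_less[of y y] in auto)
next
  case (step x v r)
  from step.prems(2) show ?case
  proof (cases rule: sat_chain_cases)
    case 1
    then show ?thesis using step sat_chain_Cons_Cons_less[of x y v r] by simp
  next
    case (2 v' r')
    have "y' \<le> y" if "sat_chain y' y (y' # t)" for y' t using sat_chain_le[OF that] .
    then have below_y: "min_label R x v \<le> y" "min_label R x v' \<le> y"
      using min_label_le \<open>cover x v\<close> \<open>cover x v'\<close> step.hyps(2) \<open>sat_chain v' y (v' # r')\<close>
      by (meson order_trans)+
    have "(min_label R x v, min_label R x v') \<in> R"
      using increasing_chain_first_label_least[OF step.hyps(2,1)] step.prems(1)
        min_label_cover(1) min_label_not_le \<open>cover x v'\<close> below_y(2) by blast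
    moreover have "(min_label R x v', min_label R x v) \<in> R"
      using increasing_chain_first_label_least[OF \<open>sat_chain v' y (v' # r')\<close> \<open>cover x v'\<close>]
        step.prems(3) 2 min_label_cover(1) min_label_not_le \<open>cover x v\<close> below_y(1) by simp
    ultimately have "v = v'"
      using R_antisym min_label_cover(2) \<open>cover x v\<close> \<open>cover x v'\<close> by metis
    then show ?thesis using step.IH[of "v' # r'"] step.prems 2 by (auto simp: successively_Cons)
  qed
qed

lemma ER_labeling_min_label: "ER_labeling R_less (min_label R)"
  unfolding ER_labeling_def increasing_iff_successively
  using exists_increasing_sat_chain increasing_sat_chain_unique by blast

lemma rank_two_switching_min_label: "rank_two_switching R_less (min_label R)"
  unfolding rank_two_switching_def
proof (intro allI impI)
  fix c and y :: 'a and i :: nat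
  assume "sat_chain bot y c" "0 < i" "i + 1 < length c"
    and "R_less (min_label R (c ! (i - 1)) (c ! i)) (min_label R (c ! i) (c ! (i + 1)))"
  moreover have "cover (c ! j) (c ! (j + 1))" if "j + 1 < length c" for j
    using that \<open>sat_chain bot y c\<close> unfolding sat_chain_def by blast
  moreover have "i - 1 + 1 = i" using \<open>0 < i\<close> by simp
  ultimately show "\<exists>!x'. cover (c ! (i - 1)) x' \<and> cover x' (c ! (i + 1)) \<and>
      min_label R (c ! (i - 1)) x' = min_label R (c ! i) (c ! (i + 1)) \<and>
      min_label R x' (c ! (i + 1)) = min_label R (c ! (i - 1)) (c ! i)"
    by (intro min_label_switch_unique) (metis add_lessD1, simp_all)
qed

lemma distinct_words_min_label: "distinct_words (min_label R)"
  unfolding distinct_words_def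
  using sat_chains_eq_if_label_words_eq min_label_cover(2) by blast

end

theorem proposition5p3:
  fixes R :: "('a::geometric_lattice \<times> 'a) set"
  assumes "linear_order_on {a. atom a} R"
  shows "EW_labeling (\<lambda>a b. (a, b) \<in> R \<and> a \<noteq> b) (min_label R)"
  unfolding EW_labeling_def
  using ER_labeling_min_label rank_two_switching_min_label distinct_words_min_label assms
  by blast

end
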